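(* Let $K$ be a field, let $P$ be a convex $n$-gon and let $D$ be a dissection of $P$ which divides $P$ into subpolygons $P_1,\ldots,P_\ell$ with $P_i$ a $d_i$-gon ($d_i\ge 3$). Let $f:\mathrm{diag}(P)\to K$ be the weak frieze with respect to $D$ whose restriction to $\mathrm{diag}(P_i)$ is the constant map with value $1$ for every $i$. Let $M_f$ be the associated weak frieze matrix. Then $$\det(M_f) = (-1)^{\ell-1}\prod_{i=1}^{\ell}(-1)^{d_i-1}(d_i-1) = (-1)^{n-1}\prod_{i=1}^{\ell}(d_i-1).$$
   Context: For a convex polygon with vertices $1,\ldots,n$ (cyclically ordered), a diagonal is any unordered pair $\{i,j\}$ of distinct vertices (including boundary edges); $\mathrm{diag}(P)$ is the set of all diagonals. A diagonal is internal if its endpoints are not cyclic neighbours. Diagonals $\{i,j\}$, $\{k,\ell\}$ cross if cyclically $i<k<j<\ell$ or $i<\ell<j<k$. A dissection is a set of pairwise non-crossing internal diagonals. A map $f:\mathrm{diag}(P)\to K$ (write $f(i,j)=f(\{i,j\})$) is a weak frieze with respect to a dissection $D$ if for every pair of crossing diagonals $\{i,j\},\{k,\ell\}$ with at least one in $D$, $f(i,j)f(k,\ell)=f(i,k)f(j,\ell)+f(i,\ell)f(j,k)$. Given subpolygons cut out by $D$ and weak friezes on them agreeing (with nonzero value) on shared diagonals, there is a unique weak frieze on $P$ with respect to $D$ restricting to them; here this is applied with all pieces constantly $1$. The weak frieze matrix $M_f$ is the symmetric $n\times n$ matrix with entries $m_{i,i}=0$ and $m_{i,j}=f(i,j)$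 for $i\neq j$. *)

theory Defs
  imports "Jordan_Normal_Form.Determinant"
begin

text \<open>Convex n-gon with vertices 0,...,n-1 in cyclic order. Diagonals are
  two-element sets of vertices.\<close>

definition crosses :: "nat \<Rightarrow> nat \<Rightarrow> nat \<Rightarrow> nat \<Rightarrow> bool" where
  "crosses i j k l \<longleftrightarrow>
     (let a = min i j; b = max i j; c = min k l; d = max k l in
       (a < c \<and> c < b \<and> b < d) \<or> (c < a \<and> a < d \<and> d < b))"

definition internal_diag :: "nat \<Rightarrow> nat \<Rightarrow> nat \<Rightarrow> bool" where
  "internal_diag n i j \<longleftrightarrow> i < n \<and> j < n \<and> i \<noteq> j \<and>
     j \<noteq> (i + 1) mod n \<and> i \<noteq> (j + 1) mod n"

definition dissection :: "nat \<Rightarrow> nat set set \<Rightarrow> bool" where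
  "dissection n D \<longleftrightarrow>
     (\<forall>e\<in>D. \<exists>i j. e = {i, j} \<and> internal_diag n i j) \<and>
     (\<forall>i j k l. {i, j} \<in> D \<and> {k, l} \<in> D \<longrightarrow> \<not> crosses i j k l)"

definition weak_frieze :: "nat \<Rightarrow> nat set set \<Rightarrow> (nat set \<Rightarrow> 'a::comm_ring_1) \<Rightarrow> bool" where
  "weak_frieze n D f \<longleftrightarrow>
     (\<forall>i j k l. i < n \<and> j < n \<and> k < n \<and> l < n \<and> crosses i j k l \<and>
        ({i, j} \<in> D \<or> {k, l} \<in> D) \<longrightarrow>
        f {i, j} * f {k, l} = f {i, k} * f {j, l} + f {i, l} * f {j, k})"

definition one_side :: "nat \<Rightarrow> nat set set \<Rightarrow> nat set \<Rightarrow> bool" where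
  "one_side n D S \<longleftrightarrow> S \<subseteq> {..<n} \<and>
     (\<forall>i j. {i, j} \<in> D \<and> i < j \<longrightarrow> S \<subseteq> {i..j} \<or> S \<inter> {i<..<j} = {})"

text \<open>The subpolygons cut out by D, given by their vertex sets: the maximal
  vertex sets not separated by any diagonal of D.\<close>
definition subpolygons :: "nat \<Rightarrow> nat set set \<Rightarrow> nat set set" where
  "subpolygons n D = {S. one_side n D S \<and> (\<forall>T. one_side n D T \<and> S \<subseteq> T \<longrightarrow> T = S)}"

definition frieze_matrix :: "nat \<Rightarrow> (nat set \<Rightarrow> 'a::zero) \<Rightarrow> 'a mat" where
  "frieze_matrix n f = mat n n (\<lambda>(i, j). if i = j then 0 else f {i, j})"

end

theory Submission
  imports Defs
begin

(* Induction on the number of diagonals. A shortest diagonal {i, j} of D cuts off an ear, the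
   polygon on the vertices i, ..., j, on which f is constantly 1. For an interior vertex r of the
   ear and a vertex s outside it, the relation for the crossing diagonals {r, s} and {i, j} reads
   f{r, s} = f{i, s} + f{j, s}. Hence subtracting rows i and j from row r leaves nonzero entries
   only in the p = j - i - 1 interior columns, namely -2 on the diagonal and -1 elsewhere. The
   determinant then factors into the determinant (-1)^p (p + 1) of this block and the determinant
   of the frieze matrix of the polygon with the interior of the ear removed, which inherits the
   dissection D - {{i, j}} and a weak frieze that is 1 on its subpolygons. This gives
   det M_f = (-1)^(n - 1) * prod (d_k - 1); the signed form follows from the count
   sum (d_k - 1) = (n - 1) + (l - 1) of the vertices of the subpolygons. *)

section \<open>Row operations and block determinants\<close>

lemma det_addrow_to_rows:
  fixes A :: "'a::comm_ring_1 mat"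
  assumes A: "A \<in> carrier_mat n n" and k: "k < n" "k \<notin> X" and X: "X \<subseteq> {..<n}"
  shows "det (mat n n (\<lambda>(r, s). if r \<in> X then A $$ (r, s) + c r * A $$ (k, s) else A $$ (r, s)))
    = det A"
proof -
  have "finite X" using X finite_subset by blast
  then show ?thesis
    using k X
  proof (induction X)
    case empty
    have "mat n n (\<lambda>(r, s). if r \<in> {} then A $$ (r, s) + c r * A $$ (k, s) else A $$ (r, s)) = A"
      using A by (intro eq_matI) auto
    then show ?case by simp
  next
    case (insert x X)
    let ?M = "\<lambda>X. mat n n (\<lambda>(r, s). if r \<in> X then A $$ (r, s) + c r * A $$ (k, s) else A $$ (r, s))"
    have "?M (insert x X) = addrow (c x) x k (?M X)"
      using insert.prems insert.hyps by (intro eq_matI) (auto simp: algebra_simps)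
    moreover have "det (addrow (c x) x k (?M X)) = det (?M X)"
      by (rule det_addrow) (use insert.prems in auto)
    ultimately show ?case using insert by simp
  qed
qed

lemma det_add_combination_of_rows:
  fixes A :: "'a::comm_ring_1 mat"
  assumes A: "A \<in> carrier_mat n n" and X: "X \<subseteq> {..<n}" and K: "K \<subseteq> {..<n}"
    and disj: "X \<inter> K = {}"
  shows "det (mat n n (\<lambda>(r, s). if r \<in> X then A $$ (r, s) + (\<Sum>k\<in>K. c r k * A $$ (k, s))
      else A $$ (r, s))) = det A"
proof -
  have "finite K" using K finite_subset by blast
  then show ?thesis
    using K disj
  proof (induction K)
    case empty
    have "mat n n (\<lambda>(r, s). if r \<in> X then A $$ (r, s) + (\<Sum>k\<in>{}. c r k * A $$ (k, s))
        else A $$ (r, s)) = A"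
      using A by (intro eq_matI) auto
    then show ?case by simp
  next
    case (insert k K)
    let ?M = "\<lambda>K. mat n n (\<lambda>(r, s). if r \<in> X then A $$ (r, s) + (\<Sum>k\<in>K. c r k * A $$ (k, s))
      else A $$ (r, s))"
    have eq: "?M (insert k K) = mat n n (\<lambda>(r, s). if r \<in> X
        then ?M K $$ (r, s) + c r k * ?M K $$ (k, s) else ?M K $$ (r, s))"
      using insert by (intro eq_matI) (auto simp: algebra_simps)
    have "det (?M (insert k K)) = det (?M K)"
      unfolding eq by (rule det_addrow_to_rows) (use insert.prems X in auto)
    also have "\<dots> = det A"
      by (rule insert.IH) (use insert.prems in auto)
    finally show ?case .
  qed
qed

lemma det_const_plus_diag:
  fixes a b :: "'a::comm_ring_1"
  assumes "n \<ge> 1"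
  shows "det (mat n n (\<lambda>(r, s). if r = s then a + b else a)) = b ^ (n - 1) * (b + of_nat n * a)"
proof -
  let ?M = "mat n n (\<lambda>(r, s). if r = s then a + b else a)"
  \<comment> \<open>Adding all rows to row 0 and then subtracting column 0 from the others
    leaves an upper triangular matrix.\<close>
  let ?N = "mat n n (\<lambda>(r, s). if r = 0 then b + of_nat n * a else ?M $$ (r, s))"
  let ?U = "mat n n (\<lambda>(r, s). if r = s then (if r = 0 then b + of_nat n * a else b)
      else if r = 0 then a else 0)"
  have col_sum: "?M $$ (0, s) + (\<Sum>k\<in>{1..<n}. ?M $$ (k, s)) = b + of_nat n * a"
    if "s < n" for s
  proof -
    have "?M $$ (0, s) + (\<Sum>k\<in>{1..<n}. ?M $$ (k, s)) = (\<Sum>k\<in>{0..<n}. ?M $$ (k, s))"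
      using assms by (simp add: sum.atLeast_Suc_lessThan)
    also have "\<dots> = (\<Sum>k\<in>{0..<n}. a + (if k = s then b else 0))"
      by (rule sum.cong) (use that in auto)
    also have "\<dots> = b + of_nat n * a"
      using that by (simp add: sum.distrib)
    finally show ?thesis .
  qed
  have row_op_N: "mat n n (\<lambda>(r, s). if r \<in> {0} then ?M $$ (r, s)
      + (\<Sum>k\<in>{1..<n}. 1 * ?M $$ (k, s)) else ?M $$ (r, s)) = ?N" (is "?L = _")
  proof (rule eq_matI)
    fix r s assume "r < dim_row ?N" "s < dim_col ?N"
    then show "?L $$ (r, s) = ?N $$ (r, s)" using col_sum[of s] by auto
  qed auto
  have det_N: "det ?N = det ?M"
    unfolding row_op_N[symmetric] by (rule det_add_combination_of_rows) (use assms in auto)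
  have row_op_U: "mat n n (\<lambda>(r, s). if r \<in> {1..<n} then transpose_mat ?N $$ (r, s)
      + (\<Sum>k\<in>{0}. (-1) * transpose_mat ?N $$ (k, s)) else transpose_mat ?N $$ (r, s)) = ?U"
    by (rule eq_matI) auto
  have "det ?U = det (transpose_mat ?N)"
    unfolding row_op_U[symmetric]
    by (rule det_add_combination_of_rows) (use assms in auto)
  also have "\<dots> = det ?M"
    using det_N det_transpose[of ?N n] by simp
  finally have det_U: "det ?U = det ?M" .
  have "upper_triangular ?U"
    unfolding upper_triangular_def by auto
  then have "det ?U = (\<Prod>r = 0..<n. ?U $$ (r, r))"
    by (subst det_upper_triangular[of _ n]) (auto simp: prod_list_diag_prod)
  also have "\<dots> = (\<Prod>r = 0..<n. if r = 0 then b + of_nat n * a else b)"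
    by (rule prod.cong) auto
  also have "\<dots> = (b + of_nat n * a) * b ^ (n - 1)"
    using assms by (simp add: prod.delta_remove)
  finally show ?thesis using det_U by (simp add: mult.commute)
qed

lemma det_neg_ones_minus_identity:
  "det (mat q q (\<lambda>(r, s). if r = s then -2 else -1)) = (-1) ^ q * (of_nat (q + 1) :: 'a::comm_ring_1)"
proof (cases q)
  case (Suc q')
  have minus_two: "(-1 :: 'a) + -1 = -2" by simp
  have "det (mat q q (\<lambda>(r, s). if r = s then -2 else -1))
      = (-1) ^ q' * (-1 + of_nat q * (-1 :: 'a))"
    using det_const_plus_diag[of q "-1::'a" "-1", unfolded minus_two] Suc by simp
  also have "\<dots> = (-1) ^ q * of_nat (q + 1)"
    unfolding Suc by (simp add: algebra_simps)
  finally show ?thesis by simp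
qed simp

lemma det_permute_rows_cols:
  fixes A :: "'a::comm_ring_1 mat"
  assumes A: "A \<in> carrier_mat n n" and \<pi>: "\<pi> permutes {0..<n}"
  shows "det (mat n n (\<lambda>(r, s). A $$ (\<pi> r, \<pi> s))) = det A"
proof -
  let ?B = "mat n n (\<lambda>(r, s). A $$ (\<pi> r, s))"
  have "transpose_mat (mat n n (\<lambda>(r, s). A $$ (\<pi> r, \<pi> s)))
      = mat n n (\<lambda>(r, s). transpose_mat ?B $$ (\<pi> r, s))"
    using \<pi> by (intro eq_matI) (auto simp: permutes_in_image)
  then have "det (mat n n (\<lambda>(r, s). A $$ (\<pi> r, \<pi> s))) = signof \<pi> * det ?B"
    using det_permute_rows[OF _ \<pi>, of "transpose_mat ?B"]
    by (metis det_transpose mat_carrier transpose_carrier_mat)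
  also have "\<dots> = (signof \<pi> * signof \<pi>) * det A"
    using det_permute_rows[OF A \<pi>] by simp
  also have "signof \<pi> * signof \<pi> = (1::'a)"
    by (simp add: sign_def)
  finally show ?thesis by simp
qed

definition skip :: "nat \<Rightarrow> nat \<Rightarrow> nat \<Rightarrow> nat" where
  "skip k p r = (if r < k then r else r + p)"

lemma strict_mono_skip: "strict_mono (skip k p)"
  unfolding strict_mono_def skip_def by auto

lemma det_block_interval:
  fixes A :: "'a::idom mat"
  assumes A: "A \<in> carrier_mat n n" and kp: "k + p \<le> n"
    and zero: "\<And>r s. k \<le> r \<Longrightarrow> r < k + p \<Longrightarrow> s < n \<Longrightarrow> s < k \<or> k + p \<le> s \<Longrightarrow> A $$ (r, s) = 0"
  shows "det A = det (mat p p (\<lambda>(r, s). A $$ (k + r, k + s)))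
    * det (mat (n - p) (n - p) (\<lambda>(r, s). A $$ (skip k p r, skip k p s)))"
proof -
  define m where "m = n - p"
  \<comment> \<open>The permutation moving the interval \<open>[k, k + p)\<close> to the end.\<close>
  define \<pi> where "\<pi> r = (if r < m then skip k p r else if r < n then r - m + k else r)" for r
  have "inj_on \<pi> {0..<n}"
    unfolding inj_on_def \<pi>_def skip_def m_def using kp by auto
  moreover have \<pi>_range: "\<pi> ` {0..<n} \<subseteq> {0..<n}"
    unfolding \<pi>_def skip_def m_def using kp by auto
  ultimately have "bij_betw \<pi> {0..<n} {0..<n}"
    unfolding bij_betw_def using endo_inj_surj by blast
  then have \<pi>: "\<pi> permutes {0..<n}"
    by (rule bij_imp_permutes) (auto simp: \<pi>_def m_def)
  let ?B11 = "mat m m (\<lambda>(r, s). A $$ (skip k p r, skip k p s))"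
  let ?B12 = "mat m p (\<lambda>(r, s). A $$ (skip k p r, k + s))"
  let ?B22 = "mat p p (\<lambda>(r, s). A $$ (k + r, k + s))"
  have n: "n = m + p" unfolding m_def using kp by simp
  have "mat n n (\<lambda>(r, s). A $$ (\<pi> r, \<pi> s)) = four_block_mat ?B11 ?B12 (0\<^sub>m p m) ?B22"
  proof (rule eq_matI)
    fix r s assume "r < dim_row (four_block_mat ?B11 ?B12 (0\<^sub>m p m) ?B22)"
      "s < dim_col (four_block_mat ?B11 ?B12 (0\<^sub>m p m) ?B22)"
    then have r: "r < n" and s: "s < n" using n by auto
    have "A $$ (\<pi> r, \<pi> s) = 0" if "m \<le> r" "s < m"
      using zero[of "\<pi> r" "\<pi> s"] \<pi>_range r s that kp
      unfolding \<pi>_def skip_def m_def by auto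
    then show "mat n n (\<lambda>(r, s). A $$ (\<pi> r, \<pi> s)) $$ (r, s)
        = four_block_mat ?B11 ?B12 (0\<^sub>m p m) ?B22 $$ (r, s)"
      using r s n by (auto simp: \<pi>_def add.commute)
  qed (use n in auto)
  then have "det A = det (four_block_mat ?B11 ?B12 (0\<^sub>m p m) ?B22)"
    using det_permute_rows_cols[OF A \<pi>] by simp
  also have "\<dots> = det ?B11 * det ?B22"
    by (rule det_four_block_mat_lower_left_zero) auto
  finally show ?thesis unfolding m_def by (simp add: mult.commute)
qed

section \<open>Dissections and their subpolygons\<close>

lemma crosses_iff:
  "a < b \<Longrightarrow> c < d \<Longrightarrow> crosses a b c d \<longleftrightarrow> (a < c \<and> c < b \<and> b < d) \<or> (c < a \<and> a < d \<and> d < b)"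
  unfolding crosses_def Let_def by (simp add: min_def max_def)

lemma crosses_strict_mono:
  assumes "strict_mono g"
  shows "crosses (g a) (g b) (g c) (g d) = crosses a b c d"
proof -
  have "min (g x) (g y) = g (min x y)" "max (g x) (g y) = g (max x y)" for x y
    using assms by (auto simp: min_def max_def strict_mono_less_eq)
  then show ?thesis
    using assms unfolding crosses_def Let_def by (simp add: strict_mono_less)
qed

lemma internal_diag_iff:
  "a < b \<Longrightarrow> internal_diag n a b \<longleftrightarrow> b < n \<and> a + 1 < b \<and> \<not> (a = 0 \<and> b = n - 1)"
proof -
  assume ab: "a < b"
  show ?thesis
  proof (cases "b < n")
    case True
    then have "(a + 1) mod n = a + 1" "(b + 1) mod n = (if b + 1 = n then 0 else b + 1)"
      using ab by auto
    then show ?thesis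
      unfolding internal_diag_def using ab True by auto
  qed (simp add: internal_diag_def)
qed

lemma dissection_memE:
  assumes "dissection n D" "e \<in> D"
  obtains a b where "e = {a, b}" "a < b" "internal_diag n a b"
proof -
  have "\<forall>e\<in>D. \<exists>x y. e = {x, y} \<and> internal_diag n x y"
    using assms(1) unfolding dissection_def by (rule conjunct1)
  then obtain x y where "e = {x, y}" "internal_diag n x y"
    using assms(2) by blast
  show ?thesis
  proof (cases "x < y")
    case True
    then show ?thesis using that \<open>e = {x, y}\<close> \<open>internal_diag n x y\<close> by blast
  next
    case False
    then have "y < x" "internal_diag n y x"
      using \<open>internal_diag n x y\<close> unfolding internal_diag_def by auto
    then show ?thesis using that[of y x] \<open>e = {x, y}\<close> by (simp add: insert_commute)
  qed
qed

lemma dissection_diagonal: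
  assumes "dissection n D" "{a, b} \<in> D" "a < b"
  shows "b < n" "a + 1 < b" "\<not> (a = 0 \<and> b = n - 1)"
proof -
  obtain x y where "{a, b} = {x, y}" "x < y" "internal_diag n x y"
    using dissection_memE[OF assms(1,2)] .
  then have "internal_diag n a b"
    using assms(3) by (auto simp: doubleton_eq_iff)
  then show "b < n" "a + 1 < b" "\<not> (a = 0 \<and> b = n - 1)"
    using internal_diag_iff[OF assms(3)] by auto
qed

lemma dissection_noncrossing:
  "dissection n D \<Longrightarrow> {a, b} \<in> D \<Longrightarrow> {c, d} \<in> D \<Longrightarrow> \<not> crosses a b c d"
  unfolding dissection_def by blast

lemma finite_subpolygons: "finite (subpolygons n D)"
proof (rule finite_subset)
  show "subpolygons n D \<subseteq> Pow {..<n}"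
    unfolding subpolygons_def one_side_def by auto
qed simp

lemma subpolygons_nonempty: "subpolygons n D \<noteq> {}"
proof -
  have "\<exists>S. one_side n D S \<and> (\<forall>T. one_side n D T \<longrightarrow> card T \<le> card S)"
  proof (rule ex_has_greatest_nat[of _ "{}" card "Suc n"])
    show "one_side n D {}" unfolding one_side_def by auto
    show "\<forall>S. one_side n D S \<longrightarrow> card S < Suc n"
      using card_mono[of "{..<n}"] unfolding one_side_def by (auto simp: less_Suc_eq_le)
  qed
  then obtain S where S: "one_side n D S" and max: "\<And>T. one_side n D T \<Longrightarrow> card T \<le> card S"
    by blast
  have "T = S" if "one_side n D T" "S \<subseteq> T" for T
  proof -
    have "finite T" using that(1) finite_subset unfolding one_side_def by blast
    then show ?thesis using that max[OF that(1)] card_subset_eq by (metis card_mono le_antisym)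
  qed
  then have "S \<in> subpolygons n D"
    unfolding subpolygons_def using S by blast
  then show ?thesis by blast
qed

lemma subpolygons_no_diagonals: "subpolygons n {} = {{..<n}}"
  unfolding subpolygons_def one_side_def by auto

text \<open>The third vertex is an endpoint of the shortest diagonal enclosing the edge
  \<open>{a, a + 1}\<close>, or a corner of the polygon if there is none.\<close>

lemma one_side_triangle_on_edge:
  assumes diss: "dissection n D" and n: "3 \<le> n" and a: "a + 1 < n"
  obtains x where "x < n" "x \<notin> {a, a + 1}" "one_side n D {a, a + 1, x}"
proof -
  let ?encl = "\<lambda>(c, d). {c, d} \<in> D \<and> c < d \<and> c \<le> a \<and> a + 1 \<le> d"
  let ?sep = "\<lambda>x c d. (c \<le> a \<and> a + 1 \<le> d \<and> c \<le> x \<and> x \<le> d)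
    \<or> ((d \<le> a \<or> a + 1 \<le> c) \<and> \<not> (c < x \<and> x < d))"
  have "\<exists>x<n. x \<notin> {a, a + 1} \<and> (\<forall>c d. {c, d} \<in> D \<longrightarrow> c < d \<longrightarrow> ?sep x c d)"
  proof (cases "\<exists>cd. ?encl cd")
    case True
    then obtain cd0 where "?encl cd0" by blast
    from ex_has_least_nat[of ?encl, OF this, of "\<lambda>(c, d). d - c"]
    obtain k l where kl: "?encl (k, l)" and min: "\<And>c d. ?encl (c, d) \<Longrightarrow> l - k \<le> d - c"
      by (auto simp: split_def)
    have l: "l < n" "k + 1 < l" using dissection_diagonal[OF diss] kl by auto
    define x where "x = (if k < a then k else l)"
    show ?thesis
    proof (intro exI conjI allI impI)
      fix c d assume cd: "{c, d} \<in> D" "c < d"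
      have "\<not> crosses c d k l" using dissection_noncrossing[OF diss cd(1)] kl by simp
      then have "\<not> ((c < k \<and> k < d \<and> d < l) \<or> (k < c \<and> c < l \<and> l < d))"
        using crosses_iff[OF cd(2)] kl by simp
      then show "?sep x c d"
        using min[of c d] cd kl l unfolding x_def by (cases "k < a") auto
    qed (use kl l in \<open>auto simp: x_def\<close>)
  next
    case False
    define x where "x = (if 0 < a then 0 else n - 1)"
    show ?thesis
    proof (intro exI conjI allI impI)
      fix c d assume cd: "{c, d} \<in> D" "c < d"
      moreover have "\<not> ?encl (c, d)" using False by blast
      ultimately show "?sep x c d"
        using dissection_diagonal(1)[OF diss cd] unfolding x_def by auto
    qed (use n a in \<open>auto simp: x_def\<close>)
  qed
  then obtain x where "x < n" "x \<notin> {a, a + 1}" and x: "\<And>c d. {c, d} \<in> D \<Longrightarrow> c < d \<Longrightarrow> ?sep x c d"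
    by blast
  moreover have "one_side n D {a, a + 1, x}"
    unfolding one_side_def using x \<open>x < n\<close> a by fastforce
  ultimately show ?thesis using that by blast
qed

section \<open>Cutting off an ear\<close>

definition one_on_subpolygons :: "nat \<Rightarrow> nat set set \<Rightarrow> (nat set \<Rightarrow> 'a::one) \<Rightarrow> bool" where
  "one_on_subpolygons n D f \<longleftrightarrow> (\<forall>S\<in>subpolygons n D. \<forall>a\<in>S. \<forall>b\<in>S. a \<noteq> b \<longrightarrow> f {a, b} = 1)"

lemma frieze_matrix_index:
  "r < n \<Longrightarrow> s < n \<Longrightarrow> frieze_matrix n f $$ (r, s) = (if r = s then 0 else f {r, s})"
  unfolding frieze_matrix_def by simp

text \<open>A shortest diagonal \<open>{i, j}\<close> of a dissection cuts off an ear: no other diagonal has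
  an endpoint strictly between \<open>i\<close> and \<open>j\<close>. Removing the \<open>p\<close> interior vertices of the ear
  leaves an \<open>m\<close>-gon, whose vertices are renumbered by \<open>lift\<close>.\<close>

locale dissection_ear =
  fixes n :: nat and D :: "nat set set" and i j :: nat
  assumes dissection: "dissection n D" and ear_diagonal: "{i, j} \<in> D" and i_less_j: "i < j"
    and shortest: "\<And>a b. {a, b} \<in> D \<Longrightarrow> a < b \<Longrightarrow> j - i \<le> b - a"
begin

definition p :: nat where "p = j - i - 1"
definition m :: nat where "m = n - p"
definition ear :: "nat set" where "ear = {i..j}"
definition interior :: "nat set" where "interior = {i<..<j}"

abbreviation lift :: "nat \<Rightarrow> nat" where "lift \<equiv> skip (Suc i) p"

definition D_rest :: "nat set set" where
  "D_rest = {e. e \<subseteq> {..<m} \<and> lift ` e \<in> D \<and> lift ` e \<noteq> {i, j}}"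

lemma j_less_n: "j < n" and Suc_i_less_j: "i + 1 < j" and not_boundary: "\<not> (i = 0 \<and> j = n - 1)"
  using dissection_diagonal[OF dissection ear_diagonal i_less_j] by auto

lemma m_ge_3: "3 \<le> m" and Suc_i_less_m: "i + 1 < m"
  using j_less_n Suc_i_less_j not_boundary unfolding m_def p_def by auto

lemma interior_eq: "interior = {Suc i..<Suc i + p}"
  using Suc_i_less_j unfolding interior_def p_def by auto

lemma diagonal_around_ear:
  assumes "{a, b} \<in> D" "a < b"
  shows "(a \<le> i \<and> j \<le> b) \<or> b \<le> i \<or> j \<le> a"
proof -
  have "\<not> crosses a b i j"
    using dissection_noncrossing[OF dissection assms(1) ear_diagonal] .
  then show ?thesis
    using crosses_iff[OF assms(2) i_less_j] shortest[OF assms] assms(2) i_less_j by arith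
qed

lemma inj_lift: "inj lift"
  using strict_mono_skip strict_mono_imp_inj_on by blast

lemma lift_less_n_iff: "lift x < n \<longleftrightarrow> x < m"
  using j_less_n Suc_i_less_j unfolding skip_def m_def p_def by auto

lemma lift_notin_interior: "lift x \<notin> interior"
  using i_less_j unfolding skip_def interior_def p_def by auto

lemma in_range_lift: "x \<notin> interior \<Longrightarrow> x \<in> range lift"
proof -
  assume "x \<notin> interior"
  then have "x = lift (if x \<le> i then x else x - p)"
    using i_less_j unfolding skip_def interior_def p_def by auto
  then show "x \<in> range lift" by blast
qed

lemma lift_i: "lift i = i" and lift_Suc_i: "lift (Suc i) = j"
  using Suc_i_less_j unfolding skip_def p_def by auto

lemma one_side_in_ear_or_outside: "one_side n D T \<Longrightarrow> T \<subseteq> ear \<or> T \<inter> interior = {}"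
  unfolding one_side_def ear_def interior_def using ear_diagonal i_less_j by blast

lemma ear_in_subpolygons: "ear \<in> subpolygons n D"
proof -
  have "one_side n D ear"
    unfolding one_side_def ear_def using j_less_n diagonal_around_ear by fastforce
  moreover have "T = ear" if "one_side n D T" "ear \<subseteq> T" for T
  proof -
    have "i + 1 \<in> ear \<inter> interior" using Suc_i_less_j unfolding ear_def interior_def by auto
    then show ?thesis using one_side_in_ear_or_outside[OF that(1)] that(2) by auto
  qed
  ultimately show ?thesis unfolding subpolygons_def by auto
qed

lemma subpolygon_disjoint_interior:
  assumes "S \<in> subpolygons n D" "S \<noteq> ear"
  shows "S \<inter> interior = {}"
proof -
  have "one_side n D ear" using ear_in_subpolygons unfolding subpolygons_def by auto
  then have "\<not> S \<subseteq> ear" using assms unfolding subpolygons_def by auto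
  then show ?thesis using one_side_in_ear_or_outside assms(1) unfolding subpolygons_def by auto
qed

lemma D_rest_iff:
  "a < m \<Longrightarrow> b < m \<Longrightarrow> {a, b} \<in> D_rest \<longleftrightarrow> {lift a, lift b} \<in> D \<and> {lift a, lift b} \<noteq> {i, j}"
  unfolding D_rest_def by auto

lemma diagonal_lift:
  assumes "{a, b} \<in> D" "a < b" "{a, b} \<noteq> {i, j}"
  obtains a' b' where "a = lift a'" "b = lift b'" "a' < b'" "b' < m" "{a', b'} \<in> D_rest"
proof -
  have "a \<notin> interior" "b \<notin> interior"
    using diagonal_around_ear[OF assms(1,2)] assms i_less_j unfolding interior_def
    by (auto simp: doubleton_eq_iff)
  then obtain a' b' where ab': "a = lift a'" "b = lift b'"
    using in_range_lift by blast
  moreover have "a' < b'"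
    using assms(2) ab' strict_mono_skip by (simp add: strict_mono_less)
  moreover have "b' < m"
    using dissection_diagonal(1)[OF dissection assms(1,2)] ab' lift_less_n_iff by simp
  ultimately show ?thesis
    using that assms D_rest_iff by auto
qed

lemma one_side_lift_iff:
  assumes S: "S \<subseteq> {..<m}"
  shows "one_side n D (lift ` S) \<longleftrightarrow> one_side m D_rest S"
proof -
  have less: "lift x < lift y \<longleftrightarrow> x < y" for x y
    using strict_mono_skip by (simp add: strict_mono_less)
  have image_iffs: "lift ` S \<subseteq> {lift a..lift b} \<longleftrightarrow> S \<subseteq> {a..b}"
    "lift ` S \<inter> {lift a<..<lift b} = {} \<longleftrightarrow> S \<inter> {a<..<b} = {}" for a b
    using strict_mono_skip by (auto simp: strict_mono_less_eq strict_mono_less)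
  show ?thesis
  proof
    assume os: "one_side m D_rest S"
    show "one_side n D (lift ` S)"
      unfolding one_side_def
    proof (intro conjI allI impI)
      show "lift ` S \<subseteq> {..<n}" using S lift_less_n_iff by auto
      fix a b assume ab: "{a, b} \<in> D \<and> a < b"
      show "lift ` S \<subseteq> {a..b} \<or> lift ` S \<inter> {a<..<b} = {}"
      proof (cases "{a, b} = {i, j}")
        case True
        then have "a = i" "b = j" using ab i_less_j by (auto simp: doubleton_eq_iff)
        then show ?thesis using lift_notin_interior unfolding interior_def by auto
      next
        case False
        then obtain a' b' where "a = lift a'" "b = lift b'" "a' < b'" "{a', b'} \<in> D_rest"
          using diagonal_lift ab by metis
        then show ?thesis using os image_iffs unfolding one_side_def by auto
      qed
    qed
  next
    assume os: "one_side n D (lift ` S)"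
    show "one_side m D_rest S"
      unfolding one_side_def
    proof (intro conjI allI impI)
      show "S \<subseteq> {..<m}" by (rule S)
      fix a b assume ab: "{a, b} \<in> D_rest \<and> a < b"
      then have "{lift a, lift b} \<in> D" "lift a < lift b"
        unfolding D_rest_def using less by auto
      then have "lift ` S \<subseteq> {lift a..lift b} \<or> lift ` S \<inter> {lift a<..<lift b} = {}"
        using os unfolding one_side_def by blast
      then show "S \<subseteq> {a..b} \<or> S \<inter> {a<..<b} = {}"
        using image_iffs by simp
    qed
  qed
qed

lemma dissection_D_rest: "dissection m D_rest"
  unfolding dissection_def
proof (intro conjI ballI allI impI)
  fix e assume "e \<in> D_rest"
  then have e: "lift ` e \<in> D" "lift ` e \<noteq> {i, j}"
    unfolding D_rest_def by auto
  obtain a b where ab: "lift ` e = {a, b}" "a < b"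
    using dissection_memE[OF dissection e(1)] by blast
  then obtain a' b' where ab': "a = lift a'" "b = lift b'" "a' < b'" "b' < m"
    using diagonal_lift e by metis
  then have "lift ` e = lift ` {a', b'}"
    using ab by simp
  then have e_eq: "e = {a', b'}"
    by (rule inj_image_eq_iff[OF inj_lift, THEN iffD1])
  have "a + 1 < b" "\<not> (a = 0 \<and> b = n - 1)"
    using dissection_diagonal[OF dissection _ ab(2)] e(1) ab(1) by auto
  moreover have "a' = i \<longrightarrow> b' \<noteq> Suc i"
    using e(2) lift_i lift_Suc_i unfolding e_eq by auto
  moreover have "lift (m - 1) = n - 1"
    using Suc_i_less_m j_less_n unfolding skip_def m_def p_def by auto
  ultimately have "a' + 1 < b'" "\<not> (a' = 0 \<and> b' = m - 1)"
    using ab' unfolding skip_def by (auto split: if_splits)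
  then show "\<exists>a b. e = {a, b} \<and> internal_diag m a b"
    using e_eq ab' internal_diag_iff by blast
next
  fix a b c d assume "{a, b} \<in> D_rest \<and> {c, d} \<in> D_rest"
  then have "{lift a, lift b} \<in> D" "{lift c, lift d} \<in> D"
    unfolding D_rest_def by auto
  then show "\<not> crosses a b c d"
    using dissection_noncrossing[OF dissection] crosses_strict_mono[OF strict_mono_skip] by metis
qed

lemma lift_vimage:
  assumes "T \<subseteq> {..<n}" "T \<inter> interior = {}"
  shows "lift -` T \<subseteq> {..<m}" "lift ` (lift -` T) = T"
proof -
  show "lift -` T \<subseteq> {..<m}" using assms(1) lift_less_n_iff by auto
  have "T \<subseteq> range lift" using assms(2) in_range_lift by blast
  then show "lift ` (lift -` T) = T" by (simp add: image_vimage_eq Int_absorb2)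
qed

lemma lift_subpolygon:
  assumes S: "S \<in> subpolygons m D_rest"
  shows "lift ` S \<in> subpolygons n D"
proof -
  have os: "one_side m D_rest S" and max: "\<And>T. one_side m D_rest T \<Longrightarrow> S \<subseteq> T \<Longrightarrow> T = S"
    using S unfolding subpolygons_def by auto
  have Sm: "S \<subseteq> {..<m}" using os unfolding one_side_def by auto
  have "T = lift ` S" if T: "one_side n D T" "lift ` S \<subseteq> T" for T
  proof (cases "T \<inter> interior = {}")
    case True
    have "T \<subseteq> {..<n}" using T(1) unfolding one_side_def by auto
    note T_lift = lift_vimage[OF this True]
    have "one_side m D_rest (lift -` T)"
      using one_side_lift_iff[OF T_lift(1)] T(1) T_lift(2) by simp
    moreover have "S \<subseteq> lift -` T" using T(2) by auto
    ultimately have "lift -` T = S" by (rule max)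
    then show ?thesis using T_lift(2) by simp
  next
    case False
    \<comment> \<open>Then \<open>T\<close> lies in the ear, so \<open>S\<close> would be the edge \<open>{i, i + 1}\<close> of the \<open>m\<close>-gon,
      which is not a maximal one-sided set.\<close>
    then have "T \<subseteq> ear" using one_side_in_ear_or_outside[OF T(1)] by auto
    have S_edge: "S \<subseteq> {i, i + 1}"
    proof
      fix x assume "x \<in> S"
      then have "lift x \<in> {i..j} - {i<..<j}"
        using T(2) \<open>T \<subseteq> ear\<close> lift_notin_interior unfolding ear_def interior_def by blast
      then have "lift x = lift i \<or> lift x = lift (Suc i)"
        using lift_i lift_Suc_i by auto
      then show "x \<in> {i, i + 1}"
        using inj_lift by (auto dest: injD)
    qed
    obtain x where "x \<notin> {i, i + 1}" "one_side m D_rest {i, i + 1, x}"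
      using one_side_triangle_on_edge[OF dissection_D_rest m_ge_3 Suc_i_less_m] by blast
    moreover have "S \<subseteq> {i, i + 1, x}" using S_edge by blast
    ultimately have "{i, i + 1, x} = S" using max by blast
    then show ?thesis using S_edge \<open>x \<notin> {i, i + 1}\<close> by blast
  qed
  moreover have "one_side n D (lift ` S)"
    using one_side_lift_iff[OF Sm] os by simp
  ultimately show ?thesis unfolding subpolygons_def by auto
qed

lemma vimage_lift_subpolygon:
  assumes S: "S \<in> subpolygons n D" "S \<noteq> ear"
  shows "lift -` S \<in> subpolygons m D_rest" "lift ` (lift -` S) = S"
proof -
  have os: "one_side n D S" and max: "\<And>T. one_side n D T \<Longrightarrow> S \<subseteq> T \<Longrightarrow> T = S"
    using S unfolding subpolygons_def by auto
  have "S \<subseteq> {..<n}" using os unfolding one_side_def by auto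
  note S_lift = lift_vimage[OF this subpolygon_disjoint_interior[OF S]]
  show "lift ` (lift -` S) = S" by (rule S_lift(2))
  have "T = lift -` S" if T: "one_side m D_rest T" "lift -` S \<subseteq> T" for T
  proof -
    have "T \<subseteq> {..<m}" using T(1) unfolding one_side_def by auto
    then have "one_side n D (lift ` T)" using one_side_lift_iff T(1) by blast
    moreover have "S \<subseteq> lift ` T" using S_lift(2) T(2) by blast
    ultimately have "lift ` T = S" using max by blast
    then show ?thesis using inj_vimage_image_eq[OF inj_lift] by blast
  qed
  moreover have "one_side m D_rest (lift -` S)"
    using one_side_lift_iff[OF S_lift(1)] os S_lift(2) by simp
  ultimately show "lift -` S \<in> subpolygons m D_rest" unfolding subpolygons_def by auto
qed

lemma bij_betw_lift_subpolygons:
  "bij_betw ((`) lift) (subpolygons m D_rest) (subpolygons n D - {ear})"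
proof (rule bij_betw_byWitness[where f' = "(-`) lift"])
  have "lift ` S \<noteq> ear" for S
  proof -
    have "Suc i \<in> interior" "Suc i \<in> ear"
      using Suc_i_less_j unfolding interior_def ear_def by auto
    then show ?thesis using lift_notin_interior by (metis imageE)
  qed
  then show "(`) lift ` subpolygons m D_rest \<subseteq> subpolygons n D - {ear}"
    using lift_subpolygon by auto
qed (use vimage_lift_subpolygon inj_lift in \<open>auto simp: inj_vimage_image_eq\<close>)

lemma weak_frieze_lift:
  assumes "weak_frieze n D f"
  shows "weak_frieze m D_rest (\<lambda>e. f (lift ` e))"
  unfolding weak_frieze_def
proof (intro allI impI)
  fix a b c d
  assume "a < m \<and> b < m \<and> c < m \<and> d < m \<and> crosses a b c d \<and> ({a, b} \<in> D_rest \<or> {c, d} \<in> D_rest)"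
  then have "lift a < n \<and> lift b < n \<and> lift c < n \<and> lift d < n
      \<and> crosses (lift a) (lift b) (lift c) (lift d) \<and> ({lift a, lift b} \<in> D \<or> {lift c, lift d} \<in> D)"
    using lift_less_n_iff crosses_strict_mono[OF strict_mono_skip] unfolding D_rest_def by auto
  then show "f (lift ` {a, b}) * f (lift ` {c, d})
      = f (lift ` {a, c}) * f (lift ` {b, d}) + f (lift ` {a, d}) * f (lift ` {b, c})"
    using assms[unfolded weak_frieze_def, rule_format, of "lift a" "lift b" "lift c" "lift d"] by simp
qed

lemma one_on_subpolygons_lift:
  assumes "one_on_subpolygons n D f"
  shows "one_on_subpolygons m D_rest (\<lambda>e. f (lift ` e))"
  unfolding one_on_subpolygons_def
proof (intro ballI impI)
  fix S a b assume "S \<in> subpolygons m D_rest" "a \<in> S" "b \<in> S" "a \<noteq> b"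
  then have "lift ` S \<in> subpolygons n D" "lift a \<in> lift ` S" "lift b \<in> lift ` S" "lift a \<noteq> lift b"
    using lift_subpolygon inj_lift by (auto dest: injD)
  then show "f (lift ` {a, b}) = 1"
    using assms unfolding one_on_subpolygons_def by simp
qed

lemma ear_value:
  "one_on_subpolygons n D f \<Longrightarrow> a \<in> ear \<Longrightarrow> b \<in> ear \<Longrightarrow> a \<noteq> b \<Longrightarrow> f {a, b} = 1"
  using ear_in_subpolygons unfolding one_on_subpolygons_def by blast

lemma ptolemy_ear:
  assumes wf: "weak_frieze n D f" and one: "one_on_subpolygons n D f"
    and r: "r \<in> interior" and s: "s < n" "s \<notin> ear"
  shows "f {r, s} = f {i, s} + f {j, s}"
proof -
  have "r < n \<and> s < n \<and> i < n \<and> j < n \<and> crosses r s i j \<and> ({r, s} \<in> D \<or> {i, j} \<in> D)"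
    using r s i_less_j j_less_n ear_diagonal
    unfolding interior_def ear_def crosses_def Let_def min_def max_def by auto
  then have "f {r, s} * f {i, j} = f {r, i} * f {s, j} + f {r, j} * f {s, i}"
    using wf[unfolded weak_frieze_def, rule_format, of r s i j] by blast
  moreover have "f {i, j} = 1" "f {r, i} = 1" "f {r, j} = 1"
    using ear_value[OF one] r i_less_j unfolding ear_def interior_def by auto
  ultimately show ?thesis by (simp add: insert_commute add.commute)
qed

lemma det_frieze_matrix_cut_ear:
  fixes f :: "nat set \<Rightarrow> 'a::idom"
  assumes wf: "weak_frieze n D f" and one: "one_on_subpolygons n D f"
  shows "det (frieze_matrix n f) = (-1) ^ p * of_nat (p + 1) * det (frieze_matrix m (\<lambda>e. f (lift ` e)))"
proof -
  let ?A = "frieze_matrix n f"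
  \<comment> \<open>Subtracting rows \<open>i\<close> and \<open>j\<close> from every interior row of the ear clears these rows
    outside the interior columns, by the Ptolemy relations for the diagonal \<open>{i, j}\<close>.\<close>
  let ?B = "mat n n (\<lambda>(r, s). if r \<in> interior then ?A $$ (r, s) + (\<Sum>k\<in>{i, j}. (-1) * ?A $$ (k, s))
    else ?A $$ (r, s))"
  have interior_less_n: "r \<in> interior \<Longrightarrow> r < n" for r
    using j_less_n unfolding interior_def by auto
  have B_zero: "?B $$ (r, s) = 0" if r: "r \<in> interior" and s: "s < n" "s \<notin> interior" for r s
  proof -
    have "r < n" "r \<noteq> s" "r \<noteq> i" "r \<noteq> j" "r \<in> ear"
      using r s interior_less_n unfolding interior_def ear_def by auto
    then have "?B $$ (r, s) = f {r, s} - ?A $$ (i, s) - ?A $$ (j, s)"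
      using r s i_less_j by (simp add: frieze_matrix_index)
    also have "\<dots> = 0"
    proof (cases "s \<in> ear")
      case True
      then have "s = i \<or> s = j" using s(2) unfolding ear_def interior_def by auto
      then show ?thesis
        using ear_value[OF one] \<open>r \<in> ear\<close> i_less_j j_less_n \<open>r \<noteq> i\<close> \<open>r \<noteq> j\<close>
        by (auto simp: frieze_matrix_index ear_def insert_commute)
    next
      case False
      then show ?thesis
        using ptolemy_ear[OF wf one r s(1)] s i_less_j j_less_n
        by (auto simp: frieze_matrix_index ear_def)
    qed
    finally show ?thesis .
  qed
  have B_interior: "mat p p (\<lambda>(r, s). ?B $$ (Suc i + r, Suc i + s))
      = mat p p (\<lambda>(r, s). if r = s then -2 else -1)"
    by (rule eq_matI)
      (use ear_value[OF one] j_less_n in \<open>auto simp: frieze_matrix_index interior_eq ear_def p_def\<close>)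
  have B_rest: "mat (n - p) (n - p) (\<lambda>(r, s). ?B $$ (lift r, lift s))
      = frieze_matrix m (\<lambda>e. f (lift ` e))"
    by (rule eq_matI) (use lift_less_n_iff lift_notin_interior inj_lift in
      \<open>auto simp: frieze_matrix_index frieze_matrix_def m_def dest: injD\<close>)
  have "det ?A = det ?B"
    by (rule det_add_combination_of_rows[symmetric])
      (use j_less_n i_less_j interior_less_n in \<open>auto simp: interior_def frieze_matrix_def\<close>)
  also have "det ?B = det (mat p p (\<lambda>(r, s). ?B $$ (Suc i + r, Suc i + s)))
      * det (mat (n - p) (n - p) (\<lambda>(r, s). ?B $$ (lift r, lift s)))"
  proof (rule det_block_interval)
    show "?B \<in> carrier_mat n n" by simp
    show "Suc i + p \<le> n" using j_less_n Suc_i_less_j unfolding p_def by simp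
    show "?B $$ (r, s) = 0"
      if "Suc i \<le> r" "r < Suc i + p" "s < n" "s < Suc i \<or> Suc i + p \<le> s" for r s
      by (rule B_zero) (use that interior_eq in auto)
  qed
  also have "\<dots> = (-1) ^ p * of_nat (p + 1) * det (frieze_matrix m (\<lambda>e. f (lift ` e)))"
    unfolding B_interior B_rest det_neg_ones_minus_identity ..
  finally show ?thesis .
qed

lemma card_lift_image: "card (lift ` S) = card S"
  using inj_lift by (simp add: card_image inj_on_subset)

lemma card_subpolygons_cut_ear: "card (subpolygons n D) = card (subpolygons m D_rest) + 1"
proof -
  have "card (subpolygons n D - {ear}) = card (subpolygons m D_rest)"
    using bij_betw_same_card[OF bij_betw_lift_subpolygons] by simp
  moreover have "0 < card (subpolygons n D)"
    using finite_subpolygons ear_in_subpolygons card_gt_0_iff by blast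
  ultimately show ?thesis
    using finite_subpolygons ear_in_subpolygons by (simp add: card_Diff_singleton)
qed

lemma sum_subpolygons_cut_ear:
  "(\<Sum>S\<in>subpolygons n D. h (card S)) = h (p + 2) + (\<Sum>S\<in>subpolygons m D_rest. h (card S))"
proof -
  have "card ear = p + 2" using Suc_i_less_j unfolding ear_def p_def by simp
  moreover have "(\<Sum>S\<in>subpolygons n D - {ear}. h (card S)) = (\<Sum>S\<in>subpolygons m D_rest. h (card S))"
    using sum.reindex_bij_betw[OF bij_betw_lift_subpolygons, of "\<lambda>S. h (card S)"]
    by (simp add: card_lift_image)
  ultimately show ?thesis
    using finite_subpolygons ear_in_subpolygons by (simp add: sum.remove)
qed

lemma prod_subpolygons_cut_ear:
  "(\<Prod>S\<in>subpolygons n D. h (card S)) = h (p + 2) * (\<Prod>S\<in>subpolygons m D_rest. h (card S))"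
proof -
  have "card ear = p + 2" using Suc_i_less_j unfolding ear_def p_def by simp
  moreover have "(\<Prod>S\<in>subpolygons n D - {ear}. h (card S)) = (\<Prod>S\<in>subpolygons m D_rest. h (card S))"
    using prod.reindex_bij_betw[OF bij_betw_lift_subpolygons, of "\<lambda>S. h (card S)"]
    by (simp add: card_lift_image)
  ultimately show ?thesis
    using finite_subpolygons ear_in_subpolygons by (simp add: prod.remove)
qed

end

section \<open>Induction over dissections\<close>

lemma dissection_ear_exists:
  assumes "dissection n D" "D \<noteq> {}"
  obtains i j where "dissection_ear n D i j"
proof -
  obtain e where "e \<in> D" using assms(2) by blast
  then obtain a b where "{a, b} \<in> D" "a < b"
    using dissection_memE[OF assms(1)] by metis
  then have "(\<lambda>(a, b). {a, b} \<in> D \<and> a < b) (a, b)" by simp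
  from ex_has_least_nat[of "\<lambda>(a, b). {a, b} \<in> D \<and> a < b", OF this, of "\<lambda>(a, b). b - a"]
  obtain i j where "{i, j} \<in> D" "i < j" "\<And>a b. {a, b} \<in> D \<Longrightarrow> a < b \<Longrightarrow> j - i \<le> b - a"
    by (auto simp: split_def)
  then have "dissection_ear n D i j"
    using assms(1) by unfold_locales auto
  then show ?thesis by (rule that)
qed

lemma dissection_induct[consumes 2, case_names no_diagonals cut_ear]:
  assumes "3 \<le> n" "dissection n D"
    and no_diagonals: "\<And>n. 3 \<le> n \<Longrightarrow> P n {}"
    and cut_ear: "\<And>n D i j. dissection_ear n D i j \<Longrightarrow>
      P (dissection_ear.m n i j) (dissection_ear.D_rest n D i j) \<Longrightarrow> P n D"
  shows "P n D"
  using assms(1,2)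
proof (induction n arbitrary: D rule: less_induct)
  case (less n)
  show ?case
  proof (cases "D = {}")
    case True
    then show ?thesis using no_diagonals less.prems by simp
  next
    case False
    then obtain i j where ear: "dissection_ear n D i j"
      using dissection_ear_exists less.prems(2) by blast
    interpret dissection_ear n D i j by (rule ear)
    have "m < n" using Suc_i_less_j j_less_n unfolding m_def p_def by simp
    then have "P m D_rest"
      using less.IH m_ge_3 dissection_D_rest by blast
    then show ?thesis using cut_ear[OF ear] by simp
  qed
qed

lemma sum_card_subpolygons:
  assumes "3 \<le> n" "dissection n D"
  shows "(\<Sum>S\<in>subpolygons n D. card S - 1) = (n - 1) + (card (subpolygons n D) - 1)"
  using assms
proof (induction n D rule: dissection_induct)
  case (no_diagonals n)
  then show ?case by (simp add: subpolygons_no_diagonals)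
next
  case (cut_ear n D i j)
  interpret dissection_ear n D i j by (rule cut_ear.hyps)
  have "card (subpolygons m D_rest) \<ge> 1"
    using finite_subpolygons subpolygons_nonempty by (simp add: Suc_le_eq card_gt_0_iff)
  moreover have "n = m + p" using j_less_n unfolding m_def p_def by simp
  ultimately show ?case
    using cut_ear.IH sum_subpolygons_cut_ear[of "\<lambda>c. c - 1"] card_subpolygons_cut_ear m_ge_3
    by simp
qed

lemma det_frieze_matrix_subpolygons:
  fixes f :: "nat set \<Rightarrow> 'a::idom"
  assumes "3 \<le> n" "dissection n D" "weak_frieze n D f" "one_on_subpolygons n D f"
  shows "det (frieze_matrix n f) = (-1) ^ (n - 1) * (\<Prod>S\<in>subpolygons n D. of_nat (card S - 1))"
  using assms
proof (induction n D arbitrary: f rule: dissection_induct)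
  case (no_diagonals n)
  then have "frieze_matrix n f = mat n n (\<lambda>(r, s). if r = s then 1 + -1 else 1)"
    by (intro eq_matI) (auto simp: frieze_matrix_def one_on_subpolygons_def subpolygons_no_diagonals)
  then show ?case
    using det_const_plus_diag[of n "1::'a" "-1"] no_diagonals.hyps
    by (simp add: subpolygons_no_diagonals of_nat_diff)
next
  case (cut_ear n D i j)
  interpret dissection_ear n D i j by (rule cut_ear.hyps)
  have "det (frieze_matrix n f) = (-1) ^ p * of_nat (p + 1) * det (frieze_matrix m (\<lambda>e. f (lift ` e)))"
    by (rule det_frieze_matrix_cut_ear[OF cut_ear.prems])
  also have "\<dots> = (-1) ^ p * of_nat (p + 1) * ((-1) ^ (m - 1) * (\<Prod>S\<in>subpolygons m D_rest. of_nat (card S - 1)))"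
    using cut_ear.IH[OF weak_frieze_lift one_on_subpolygons_lift, OF cut_ear.prems] by simp
  also have "\<dots> = (-1) ^ (p + (m - 1)) * (of_nat (p + 2 - 1) * (\<Prod>S\<in>subpolygons m D_rest. of_nat (card S - 1)))"
    by (simp add: power_add)
  also have "\<dots> = (-1) ^ (n - 1) * (\<Prod>S\<in>subpolygons n D. of_nat (card S - 1))"
  proof -
    have "p + (m - 1) = n - 1" using j_less_n m_ge_3 unfolding m_def p_def by simp
    moreover have "(\<Prod>S\<in>subpolygons n D. of_nat (card S - 1))
        = of_nat (p + 2 - 1) * (\<Prod>S\<in>subpolygons m D_rest. (of_nat (card S - 1) :: 'a))"
      by (rule prod_subpolygons_cut_ear)
    ultimately show ?thesis by argo
  qed
  finally show ?case .
qed

theorem corollary4p1: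
  fixes n :: nat and D :: "nat set set" and f :: "nat set \<Rightarrow> 'a::field"
  assumes "n \<ge> 3"
    and "dissection n D"
    and "weak_frieze n D f"
    and "\<forall>S\<in>subpolygons n D. \<forall>i\<in>S. \<forall>j\<in>S. i \<noteq> j \<longrightarrow> f {i, j} = 1"
  shows "det (frieze_matrix n f) =
           (-1) ^ (card (subpolygons n D) - 1) *
           (\<Prod>S\<in>subpolygons n D. (-1) ^ (card S - 1) * of_nat (card S - 1))
       \<and> det (frieze_matrix n f) =
           (-1) ^ (n - 1) * (\<Prod>S\<in>subpolygons n D. of_nat (card S - 1))"
proof -
  let ?l = "card (subpolygons n D)"
  have det: "det (frieze_matrix n f) = (-1) ^ (n - 1) * (\<Prod>S\<in>subpolygons n D. of_nat (card S - 1))"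
    using det_frieze_matrix_subpolygons assms unfolding one_on_subpolygons_def by blast
  have "(-1) ^ (?l - 1) * (\<Prod>S\<in>subpolygons n D. (-1) ^ (card S - 1) * of_nat (card S - 1))
      = (-1) ^ ((?l - 1) + (\<Sum>S\<in>subpolygons n D. card S - 1)) * (\<Prod>S\<in>subpolygons n D. of_nat (card S - 1) :: 'a)"
    by (simp add: prod.distrib power_sum power_add)
  also have "(?l - 1) + (\<Sum>S\<in>subpolygons n D. card S - 1) = 2 * (?l - 1) + (n - 1)"
    using sum_card_subpolygons assms(1,2) by simp
  finally show ?thesis
    using det by (simp add: power_add power_mult)
qed

end
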